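(* Let $\mathcal{M}=\langle S;\{R_i\}_{i\in I}\rangle$ be a model, $I$ an $\mathcal{M}$-interpretation, $\Gamma=\{x_i:A_i\}_{1\le i\le n}$, $\Delta=\{a_j:B_j\}_{1\le j\le m}$, $u_i\in I(A_i)$ for $1\le i\le n$, and $\bar v_j\in I(B_j)^\perp$ for $1\le j\le m$. If $\Gamma\vdash t:A;\Delta$, then $t[x_1:=u_1,\dots,x_n:=u_n,a_1:=^*\bar v_1,\dots,a_m:=^*\bar v_m]\in I(A)$.
   Context: Formulas are built from propositional variables and $\perp$ using $\to,\wedge,\vee$. Terms $\mathcal{T}$ and $\mathcal{E}$-terms: with disjoint sets $\mathcal{X}$ ($\lambda$-variables) and $\mathcal{A}$ ($\mu$-variables), $\mathcal{T} ::= x \mid \lambda x.\mathcal{T} \mid (\mathcal{T}\ \mathcal{E}) \mid \langle \mathcal{T},\mathcal{T}\rangle \mid \omega_1\mathcal{T} \mid \omega_2\mathcal{T} \mid \mu a.\mathcal{T} \mid (a\ \mathcal{T})$ and $\mathcal{E} ::= \mathcal{T} \mid \pi_1 \mid \pi_2 \mid [x.\mathcal{T}, y.\mathcal{T}]$. Typing judgements $\Gamma\vdash t:A;\Delta$ are generated by: $\Gamma,x:A\vdash x:A;\Delta$; from $\Gamma,x:A\vdash t:B;\Delta$ infer $\Gamma\vdash\lambda x.t:A\to B;\Delta$; from $\Gamma\vdash u:A\to B;\Delta$ and $\Gamma\vdash v:A;\Delta$ infer $\Gamma\vdash(u\ v):B;\Delta$; from $\Gamma\vdash u:A;\Delta$,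 $\Gamma\vdash v:B;\Delta$ infer $\Gamma\vdash\langle u,v\rangle:A\wedge B;\Delta$; from $\Gamma\vdash t:A\wedge B;\Delta$ infer $\Gamma\vdash(t\ \pi_1):A;\Delta$ and $\Gamma\vdash(t\ \pi_2):B;\Delta$; from $\Gamma\vdash t:A;\Delta$ infer $\Gamma\vdash\omega_1t:A\vee B;\Delta$; from $\Gamma\vdash t:B;\Delta$ infer $\Gamma\vdash\omega_2t:A\vee B;\Delta$; from $\Gamma\vdash t:A\vee B;\Delta$, $\Gamma,x:A\vdash u:C;\Delta$, $\Gamma,y:B\vdash v:C;\Delta$ infer $\Gamma\vdash(t\ [x.u,y.v]):C;\Delta$; from $\Gamma\vdash t:A;\Delta,a:A$ infer $\Gamma\vdash(a\ t):\perp;\Delta,a:A$; from $\Gamma\vdash t:\perp;\Delta,a:A$ infer $\Gamma\vdash\mu a.t:A;\Delta$. Reduction $\triangleright$ is the compatible closure of: $(\lambda x.u\ v)\triangleright u[x:=v]$; $(\langle t_1,t_2\rangle\ \pi_i)\triangleright t_i$; $(\omega_i t\ [x_1.u_1,x_2.u_2])\triangleright u_i[x_i:=t]$; $((t\ [x_1.u_1,x_2.u_2])\ \varepsilon)\triangleright(t\ [x_1.(u_1\ \varepsilon),x_2.(u_2\ \varepsilon)])$; $(\mu a.t\ \varepsilon)\triangleright\mu a.t[a:=^*\varepsilon]$; $\triangleright^*$ is its reflexive-transitive closure. $\mathcal{E}^{<\omega}$ is the set of finite sequences of $\mathcal{E}$-terms; for $\bar w=w_1\dots w_n$, $(t\ \bar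 w)$ is $t$ if $n=0$ and $((t\ w_1)\ w_2\dots w_n)$ otherwise; $t[a:=^*\bar w]$ is obtained from $t$ by replacing inductively each subterm $(a\ v)$ by $(a\ (v\ \bar w))$. For $X\subseteq\mathcal{E}^{<\omega}$ and a set of terms $S$, $X\to S=\{t\mid (t\ \bar w)\in S\ \forall\bar w\in X\}$. A set of terms $S$ is $\mu$-saturated if (i) $u\in S$ and $v\triangleright^* u$ imply $v\in S$, and (ii) $t\in S$, $a\in\mathcal{A}$ imply $\mu a.t\in S$ and $(a\ t)\in S$. For sets of terms $K,L$ and fixed $\mu$-saturated $S$: $K\to L=\{t\mid (t\ u)\in L\ \forall u\in K\}$; $K\wedge L=\{t\mid (t\ \pi_1)\in K,\ (t\ \pi_2)\in L\}$; $K\vee L=\{t\mid$ for all $x,y,u,v$: if $u[x:=r]\in S$ and $v[y:=s]\in S$ for all $r\in K,s\in L$, then $(t\ [x.u,y.v])\in S\}$. A model $\mathcal{M}=\langle S;\{R_i\}_{i\in I}\rangle$ ($S$ $\mu$-saturated, each $R_i=X_i\to S$ with $X_i\subseteq\mathcal{E}^{<\omega}$) is the smallest set of sets of terms containing $S$ and all $R_i$ and closed under $\to,\wedge,\vee$. For $G\in\mathcal{M}$, $G^\perp=\bigcup\{X\subseteq\mathcal{E}^{<\omega}\mid G=X\to S\}$. An $\mathcal{M}$-interpretation is a map $I$ from propositional variables to $\mathcal{M}$, extended by $I(\perp)=S$, $I(A\to B)=I(A)\to I(B)$, $I(A\wedge B)=I(A)\wedge I(B)$, $I(A\vee B)=I(A)\vee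 I(B)$. *)

theory Defs
  imports Main
begin

datatype form = PVar nat | Bot | Imp form form | Conj form form | Disj form form

section \<open>Terms (de Bruijn indices; two separate index spaces)\<close>

text \<open>Var i : lambda-variable with index i; MVar a t : the term (a t) for the mu-variable
  with index a. Binders: Lam binds lambda-index 0; Mu binds mu-index 0;
  Case u v is the E-term [x.u, y.v], where x (resp. y) is lambda-index 0 in u (resp. v).\<close>

datatype trm = Var nat | Lam trm | App trm elim | Pair trm trm | Inj1 trm | Inj2 trm
  | Mu trm | MVar nat trm
and elim = ETrm trm | Proj1 | Proj2 | Case trm trm

definition up :: "(nat \<Rightarrow> nat) \<Rightarrow> nat \<Rightarrow> nat" where
  "up f i = (case i of 0 \<Rightarrow> 0 | Suc j \<Rightarrow> Suc (f j))"

definition scons :: "'a \<Rightarrow> (nat \<Rightarrow> 'a) \<Rightarrow> nat \<Rightarrow> 'a" where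
  "scons x f i = (case i of 0 \<Rightarrow> x | Suc j \<Rightarrow> f j)"

primrec ren :: "(nat \<Rightarrow> nat) \<Rightarrow> (nat \<Rightarrow> nat) \<Rightarrow> trm \<Rightarrow> trm"
  and rene :: "(nat \<Rightarrow> nat) \<Rightarrow> (nat \<Rightarrow> nat) \<Rightarrow> elim \<Rightarrow> elim" where
  "ren f g (Var i) = Var (f i)"
| "ren f g (Lam t) = Lam (ren (up f) g t)"
| "ren f g (App t e) = App (ren f g t) (rene f g e)"
| "ren f g (Pair t u) = Pair (ren f g t) (ren f g u)"
| "ren f g (Inj1 t) = Inj1 (ren f g t)"
| "ren f g (Inj2 t) = Inj2 (ren f g t)"
| "ren f g (Mu t) = Mu (ren f (up g) t)"
| "ren f g (MVar a t) = MVar (g a) (ren f g t)"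
| "rene f g (ETrm t) = ETrm (ren f g t)"
| "rene f g Proj1 = Proj1"
| "rene f g Proj2 = Proj2"
| "rene f g (Case u v) = Case (ren (up f) g u) (ren (up f) g v)"

primrec apps :: "trm \<Rightarrow> elim list \<Rightarrow> trm" where
  "apps t [] = t"
| "apps t (w # ws) = apps (App t w) ws"

text \<open>Simultaneous substitution t[x_i := sigma i, a_j :=* theta j]: each lambda-variable i is
  replaced by sigma i, and each subterm (a v) is replaced (inductively) by (a (v (theta a))).\<close>
primrec subst :: "(nat \<Rightarrow> trm) \<Rightarrow> (nat \<Rightarrow> elim list) \<Rightarrow> trm \<Rightarrow> trm"
  and subste :: "(nat \<Rightarrow> trm) \<Rightarrow> (nat \<Rightarrow> elim list) \<Rightarrow> elim \<Rightarrow> elim" where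
  "subst \<sigma> \<theta> (Var i) = \<sigma> i"
| "subst \<sigma> \<theta> (Lam t) =
     Lam (subst (scons (Var 0) (ren Suc id \<circ> \<sigma>)) (map (rene Suc id) \<circ> \<theta>) t)"
| "subst \<sigma> \<theta> (App t e) = App (subst \<sigma> \<theta> t) (subste \<sigma> \<theta> e)"
| "subst \<sigma> \<theta> (Pair t u) = Pair (subst \<sigma> \<theta> t) (subst \<sigma> \<theta> u)"
| "subst \<sigma> \<theta> (Inj1 t) = Inj1 (subst \<sigma> \<theta> t)"
| "subst \<sigma> \<theta> (Inj2 t) = Inj2 (subst \<sigma> \<theta> t)"
| "subst \<sigma> \<theta> (Mu t) =
     Mu (subst (ren id Suc \<circ> \<sigma>) (scons [] (map (rene id Suc) \<circ> \<theta>)) t)"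
| "subst \<sigma> \<theta> (MVar a t) = MVar a (apps (subst \<sigma> \<theta> t) (\<theta> a))"
| "subste \<sigma> \<theta> (ETrm t) = ETrm (subst \<sigma> \<theta> t)"
| "subste \<sigma> \<theta> Proj1 = Proj1"
| "subste \<sigma> \<theta> Proj2 = Proj2"
| "subste \<sigma> \<theta> (Case u v) =
     Case (subst (scons (Var 0) (ren Suc id \<circ> \<sigma>)) (map (rene Suc id) \<circ> \<theta>) u)
          (subst (scons (Var 0) (ren Suc id \<circ> \<sigma>)) (map (rene Suc id) \<circ> \<theta>) v)"

text \<open>u[x:=v], where x is the lambda-index 0 bound by the enclosing binder.\<close>
definition subst0 :: "trm \<Rightarrow> trm \<Rightarrow> trm" where
  "subst0 u v = subst (scons v Var) (\<lambda>_. []) u"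

text \<open>t[a:=* eps], where a is the mu-index 0 bound by the enclosing Mu;
  eps comes from outside, so it is shifted under the binder.\<close>
definition msubst0 :: "trm \<Rightarrow> elim \<Rightarrow> trm" where
  "msubst0 t e = subst Var (scons [rene id Suc e] (\<lambda>_. [])) t"

inductive red :: "trm \<Rightarrow> trm \<Rightarrow> bool"
  and rede :: "elim \<Rightarrow> elim \<Rightarrow> bool" where
  beta: "red (App (Lam u) (ETrm v)) (subst0 u v)"
| proj1: "red (App (Pair t1 t2) Proj1) t1"
| proj2: "red (App (Pair t1 t2) Proj2) t2"
| case1: "red (App (Inj1 t) (Case u1 u2)) (subst0 u1 t)"
| case2: "red (App (Inj2 t) (Case u1 u2)) (subst0 u2 t)"
| comm: "red (App (App t (Case u1 u2)) e)
              (App t (Case (App u1 (rene Suc id e)) (App u2 (rene Suc id e))))"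
| mu: "red (App (Mu t) e) (Mu (msubst0 t e))"
| c_lam: "red t t' \<Longrightarrow> red (Lam t) (Lam t')"
| c_app1: "red t t' \<Longrightarrow> red (App t e) (App t' e)"
| c_app2: "rede e e' \<Longrightarrow> red (App t e) (App t e')"
| c_pair1: "red t t' \<Longrightarrow> red (Pair t u) (Pair t' u)"
| c_pair2: "red u u' \<Longrightarrow> red (Pair t u) (Pair t u')"
| c_inj1: "red t t' \<Longrightarrow> red (Inj1 t) (Inj1 t')"
| c_inj2: "red t t' \<Longrightarrow> red (Inj2 t) (Inj2 t')"
| c_mu: "red t t' \<Longrightarrow> red (Mu t) (Mu t')"
| c_mvar: "red t t' \<Longrightarrow> red (MVar a t) (MVar a t')"
| ce_trm: "red t t' \<Longrightarrow> rede (ETrm t) (ETrm t')"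
| ce_case1: "red u u' \<Longrightarrow> rede (Case u v) (Case u' v)"
| ce_case2: "red v v' \<Longrightarrow> rede (Case u v) (Case u v')"

abbreviation reds :: "trm \<Rightarrow> trm \<Rightarrow> bool" where
  "reds \<equiv> red\<^sup>*\<^sup>*"

type_synonym ctx = "nat \<Rightarrow> form option"

inductive typing :: "ctx \<Rightarrow> trm \<Rightarrow> form \<Rightarrow> ctx \<Rightarrow> bool" where
  ax: "\<Gamma> x = Some A \<Longrightarrow> typing \<Gamma> (Var x) A \<Delta>"
| imp_i: "typing (scons (Some A) \<Gamma>) t B \<Delta> \<Longrightarrow> typing \<Gamma> (Lam t) (Imp A B) \<Delta>"
| imp_e: "typing \<Gamma> u (Imp A B) \<Delta> \<Longrightarrow> typing \<Gamma> v A \<Delta> \<Longrightarrow> typing \<Gamma> (App u (ETrm v)) B \<Delta>"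
| conj_i: "typing \<Gamma> u A \<Delta> \<Longrightarrow> typing \<Gamma> v B \<Delta> \<Longrightarrow> typing \<Gamma> (Pair u v) (Conj A B) \<Delta>"
| conj_e1: "typing \<Gamma> t (Conj A B) \<Delta> \<Longrightarrow> typing \<Gamma> (App t Proj1) A \<Delta>"
| conj_e2: "typing \<Gamma> t (Conj A B) \<Delta> \<Longrightarrow> typing \<Gamma> (App t Proj2) B \<Delta>"
| disj_i1: "typing \<Gamma> t A \<Delta> \<Longrightarrow> typing \<Gamma> (Inj1 t) (Disj A B) \<Delta>"
| disj_i2: "typing \<Gamma> t B \<Delta> \<Longrightarrow> typing \<Gamma> (Inj2 t) (Disj A B) \<Delta>"
| disj_e: "typing \<Gamma> t (Disj A B) \<Delta> \<Longrightarrow> typing (scons (Some A) \<Gamma>) u C \<Delta> \<Longrightarrow>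
           typing (scons (Some B) \<Gamma>) v C \<Delta> \<Longrightarrow> typing \<Gamma> (App t (Case u v)) C \<Delta>"
| mvar: "\<Delta> a = Some A \<Longrightarrow> typing \<Gamma> t A \<Delta> \<Longrightarrow> typing \<Gamma> (MVar a t) Bot \<Delta>"
| mu: "typing \<Gamma> t Bot (scons (Some A) \<Delta>) \<Longrightarrow> typing \<Gamma> (Mu t) A \<Delta>"

text \<open>(ii) of mu-saturation: binding the free mu-variable with index k by mu.\<close>
definition mu_bind :: "nat \<Rightarrow> trm \<Rightarrow> trm" where
  "mu_bind k t = Mu (ren id (\<lambda>i. if i = k then 0 else Suc i) t)"

definition mu_saturated :: "trm set \<Rightarrow> bool" where
  "mu_saturated S \<longleftrightarrow>
     (\<forall>u v. u \<in> S \<and> reds v u \<longrightarrow> v \<in> S) \<and>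
     (\<forall>t a. t \<in> S \<longrightarrow> mu_bind a t \<in> S \<and> MVar a t \<in> S)"

definition seq_arrow :: "elim list set \<Rightarrow> trm set \<Rightarrow> trm set" where
  "seq_arrow X S = {t. \<forall>ws\<in>X. apps t ws \<in> S}"

definition s_imp :: "trm set \<Rightarrow> trm set \<Rightarrow> trm set" where
  "s_imp K L = {t. \<forall>u\<in>K. App t (ETrm u) \<in> L}"

definition s_conj :: "trm set \<Rightarrow> trm set \<Rightarrow> trm set" where
  "s_conj K L = {t. App t Proj1 \<in> K \<and> App t Proj2 \<in> L}"

definition s_disj :: "trm set \<Rightarrow> trm set \<Rightarrow> trm set \<Rightarrow> trm set" where
  "s_disj S K L = {t. \<forall>u v. (\<forall>r\<in>K. subst0 u r \<in> S) \<and> (\<forall>s\<in>L. subst0 v s \<in> S)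
                        \<longrightarrow> App t (Case u v) \<in> S}"

text \<open>The model generated by S and R_i = X i \<rightarrow> S.\<close>
inductive_set model :: "trm set \<Rightarrow> ('i \<Rightarrow> elim list set) \<Rightarrow> trm set set"
  for S :: "trm set" and X :: "'i \<Rightarrow> elim list set" where
  base: "S \<in> model S X"
| gen: "seq_arrow (X i) S \<in> model S X"
| imp: "K \<in> model S X \<Longrightarrow> L \<in> model S X \<Longrightarrow> s_imp K L \<in> model S X"
| conj: "K \<in> model S X \<Longrightarrow> L \<in> model S X \<Longrightarrow> s_conj K L \<in> model S X"
| disj: "K \<in> model S X \<Longrightarrow> L \<in> model S X \<Longrightarrow> s_disj S K L \<in> model S X"

definition perp :: "trm set \<Rightarrow> trm set \<Rightarrow> elim list set" where
  "perp S G = \<Union>{Y. G = seq_arrow Y S}"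

primrec interp :: "trm set \<Rightarrow> (nat \<Rightarrow> trm set) \<Rightarrow> form \<Rightarrow> trm set" where
  "interp S I (PVar p) = I p"
| "interp S I Bot = S"
| "interp S I (Imp A B) = s_imp (interp S I A) (interp S I B)"
| "interp S I (Conj A B) = s_conj (interp S I A) (interp S I B)"
| "interp S I (Disj A B) = s_disj S (interp S I A) (interp S I B)"

end

theory Submission
  imports Defs
begin

text \<open>
  The mu-rule forces a
  generalisation: the induction hypothesis for the body of Mu leaves the bound
  mu-name free, so it must be renamed to a fresh name k before mu-saturation
  (which only binds free names) can be used.  We therefore prove the statement for
  a substitution that simultaneously renames mu-names by an arbitrary map g
  (gsubst); ordinary substitution is the case g = id.
\<close>

lemma up_simps [simp]: "up f 0 = 0" "up f (Suc j) = Suc (f j)"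
  by (simp_all add: up_def)

lemma scons_simps [simp]: "scons x s 0 = x" "scons x s (Suc j) = s j"
  by (simp_all add: scons_def)

lemma up_id [simp]: "up id = id" "up (\<lambda>a. a) = (\<lambda>a. a)"
  by (simp_all add: fun_eq_iff up_def split: nat.split)

lemma up_comp: "up f \<circ> up g = up (f \<circ> g)"
  by (simp add: fun_eq_iff up_def split: nat.split)

lemma up_Suc [simp]: "up f \<circ> Suc = Suc \<circ> f"
  by (simp add: fun_eq_iff)

lemma scons_Suc [simp]: "scons x s \<circ> Suc = s"
  by (simp add: fun_eq_iff)

primrec gsubst :: "(nat \<Rightarrow> trm) \<Rightarrow> (nat \<Rightarrow> elim list) \<Rightarrow> (nat \<Rightarrow> nat) \<Rightarrow> trm \<Rightarrow> trm"
  and gsubste :: "(nat \<Rightarrow> trm) \<Rightarrow> (nat \<Rightarrow> elim list) \<Rightarrow> (nat \<Rightarrow> nat) \<Rightarrow> elim \<Rightarrow> elim" where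
  "gsubst \<sigma> \<theta> g (Var i) = \<sigma> i"
| "gsubst \<sigma> \<theta> g (Lam t) =
     Lam (gsubst (scons (Var 0) (ren Suc id \<circ> \<sigma>)) (map (rene Suc id) \<circ> \<theta>) g t)"
| "gsubst \<sigma> \<theta> g (App t e) = App (gsubst \<sigma> \<theta> g t) (gsubste \<sigma> \<theta> g e)"
| "gsubst \<sigma> \<theta> g (Pair t u) = Pair (gsubst \<sigma> \<theta> g t) (gsubst \<sigma> \<theta> g u)"
| "gsubst \<sigma> \<theta> g (Inj1 t) = Inj1 (gsubst \<sigma> \<theta> g t)"
| "gsubst \<sigma> \<theta> g (Inj2 t) = Inj2 (gsubst \<sigma> \<theta> g t)"
| "gsubst \<sigma> \<theta> g (Mu t) =
     Mu (gsubst (ren id Suc \<circ> \<sigma>) (scons [] (map (rene id Suc) \<circ> \<theta>)) (up g) t)"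
| "gsubst \<sigma> \<theta> g (MVar a t) = MVar (g a) (apps (gsubst \<sigma> \<theta> g t) (\<theta> a))"
| "gsubste \<sigma> \<theta> g (ETrm t) = ETrm (gsubst \<sigma> \<theta> g t)"
| "gsubste \<sigma> \<theta> g Proj1 = Proj1"
| "gsubste \<sigma> \<theta> g Proj2 = Proj2"
| "gsubste \<sigma> \<theta> g (Case u v) =
     Case (gsubst (scons (Var 0) (ren Suc id \<circ> \<sigma>)) (map (rene Suc id) \<circ> \<theta>) g u)
          (gsubst (scons (Var 0) (ren Suc id \<circ> \<sigma>)) (map (rene Suc id) \<circ> \<theta>) g v)"

lemma subst_is_gsubst: "subst \<sigma> \<theta> t = gsubst \<sigma> \<theta> id t" "subste \<sigma> \<theta> e = gsubste \<sigma> \<theta> id e"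
  by (induct t and e arbitrary: \<sigma> \<theta> and \<sigma> \<theta> rule: trm.induct elim.induct) auto

lemma gsubst_cong: "\<sigma> = \<sigma>' \<Longrightarrow> \<theta> = \<theta>' \<Longrightarrow> g = g' \<Longrightarrow> gsubst \<sigma> \<theta> g t = gsubst \<sigma>' \<theta>' g' t"
  by simp

lemma apps_append: "apps t (xs @ ys) = apps (apps t xs) ys"
  by (induct xs arbitrary: t) auto

lemma ren_apps: "ren f g (apps t ws) = apps (ren f g t) (map (rene f g) ws)"
  by (induct ws arbitrary: t) auto

lemma gsubst_apps: "gsubst \<sigma> \<theta> g (apps t ws) = apps (gsubst \<sigma> \<theta> g t) (map (gsubste \<sigma> \<theta> g) ws)"
  by (induct ws arbitrary: t) auto

lemma ren_ren:
  "ren f g (ren f' g' t) = ren (f \<circ> f') (g \<circ> g') t"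
  "rene f g (rene f' g' e) = rene (f \<circ> f') (g \<circ> g') e"
  by (induct t and e arbitrary: f g f' g' and f g f' g' rule: trm.induct elim.induct)
     (auto simp: up_comp)

lemma ren_id: "ren id id t = t" "rene id id e = e"
  by (induct t and e rule: trm.induct elim.induct) auto

lemma ren_gsubst:
  "ren f g (gsubst \<sigma> \<theta> k t) = gsubst (ren f g \<circ> \<sigma>) (map (rene f g) \<circ> \<theta>) (g \<circ> k) t"
  "rene f g (gsubste \<sigma> \<theta> k e) = gsubste (ren f g \<circ> \<sigma>) (map (rene f g) \<circ> \<theta>) (g \<circ> k) e"
  by (induct t and e arbitrary: f g \<sigma> \<theta> k and f g \<sigma> \<theta> k rule: trm.induct elim.induct)
    (auto intro!: gsubst_cong simp: fun_eq_iff scons_def up_def ren_ren ren_apps split: nat.split)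

lemma gsubst_ren:
  "gsubst \<sigma> \<rho> k (ren f g t) = gsubst (\<sigma> \<circ> f) (\<rho> \<circ> g) (k \<circ> g) t"
  "gsubste \<sigma> \<rho> k (rene f g e) = gsubste (\<sigma> \<circ> f) (\<rho> \<circ> g) (k \<circ> g) e"
  by (induct t and e arbitrary: f g \<sigma> \<rho> k and f g \<sigma> \<rho> k rule: trm.induct elim.induct)
    (auto intro!: gsubst_cong simp: fun_eq_iff scons_def up_def split: nat.split)

lemma lift_trivial_subst:
  "scons (Var 0) (ren Suc id \<circ> Var) = Var" "ren id Suc \<circ> Var = Var"
  "map (rene Suc id) \<circ> (\<lambda>_. []) = (\<lambda>_. [])" "scons [] (map (rene id Suc) \<circ> (\<lambda>_. [])) = (\<lambda>_. [])"
  by (auto simp: fun_eq_iff scons_def split: nat.split)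

lemma gsubst_Var: "gsubst Var (\<lambda>_. []) k t = ren id k t" "gsubste Var (\<lambda>_. []) k e = rene id k e"
  by (induct t and e arbitrary: k and k rule: trm.induct elim.induct) (simp_all add: lift_trivial_subst)

lemma gsubst_gsubst:
  "gsubst \<tau> \<rho> id (gsubst \<sigma> \<theta> k t) =
     gsubst (gsubst \<tau> \<rho> id \<circ> \<sigma>) (\<lambda>a. map (gsubste \<tau> \<rho> id) (\<theta> a) @ \<rho> (k a)) k t"
  "gsubste \<tau> \<rho> id (gsubste \<sigma> \<theta> k e) =
     gsubste (gsubst \<tau> \<rho> id \<circ> \<sigma>) (\<lambda>a. map (gsubste \<tau> \<rho> id) (\<theta> a) @ \<rho> (k a)) k e"
proof (induct t and e arbitrary: \<tau> \<rho> \<sigma> \<theta> k and \<tau> \<rho> \<sigma> \<theta> k rule: trm.induct elim.induct)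
  case (Mu t)
  show ?case
    by (simp only: gsubst.simps up_id Mu)
      (auto simp: comp_def intro!: gsubst_cong
        simp: fun_eq_iff scons_def up_def gsubst_ren ren_gsubst split: nat.split)
qed (auto intro!: gsubst_cong simp: fun_eq_iff scons_def up_def gsubst_ren ren_gsubst
    gsubst_apps apps_append split: nat.split)

lemma subst_shifted:
  "gsubst (scons u Var) (\<lambda>_. []) id (ren Suc id v) = v"
  "gsubste (scons u Var) (\<lambda>_. []) id (rene Suc id e) = e"
  by (simp_all add: gsubst_ren gsubst_Var ren_id)

lemma subst0_lifted:
  "subst0 (gsubst (scons (Var 0) (ren Suc id \<circ> \<sigma>)) (map (rene Suc id) \<circ> \<theta>) g t) u =
     gsubst (scons u \<sigma>) \<theta> g t"
  unfolding subst0_def subst_is_gsubst gsubst_gsubst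
  by (rule gsubst_cong) (auto simp: fun_eq_iff scons_def subst_shifted map_idI split: nat.split)

lemma subst0_apps: "subst0 (apps U (map (rene Suc id) ws)) r = apps (subst0 U r) ws"
  unfolding subst0_def subst_is_gsubst gsubst_apps by (simp add: subst_shifted map_idI)

lemma msubst_shifted:
  "gsubst Var (scons W (\<lambda>_. [])) id (ren id Suc v) = ren id Suc v"
  "gsubste Var (scons W (\<lambda>_. [])) id (rene id Suc e) = rene id Suc e"
  by (simp_all add: gsubst_ren gsubst_Var)

lemma msubst0_msubst:
  "subst Var (scons W (\<lambda>_. [])) (msubst0 b e) = subst Var (scons (rene id Suc e # W) (\<lambda>_. [])) b"
  unfolding msubst0_def subst_is_gsubst gsubst_gsubst
  by (rule gsubst_cong) (auto simp: fun_eq_iff scons_def msubst_shifted split: nat.split)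

lemma msubst_nil: "subst Var (scons [] (\<lambda>_. [])) b = b"
proof -
  have "scons [] (\<lambda>_. []) = (\<lambda>_. ([]::elim list))"
    by (auto simp: fun_eq_iff scons_def split: nat.split)
  then show ?thesis by (simp add: subst_is_gsubst gsubst_Var ren_id)
qed

lemma msubst_Mu_body:
  "subst Var (scons W (\<lambda>_. []))
      (gsubst (ren id Suc \<circ> \<sigma>) (scons [] (map (rene id Suc) \<circ> \<theta>)) (up g) t)
   = gsubst (ren id Suc \<circ> \<sigma>) (scons W (map (rene id Suc) \<circ> \<theta>)) (up g) t"
  unfolding subst_is_gsubst gsubst_gsubst
  by (rule gsubst_cong) (auto simp: fun_eq_iff scons_def msubst_shifted up_def map_idI split: nat.split)

lemma reds_apps: "reds t t' \<Longrightarrow> reds (apps t ws) (apps t' ws)"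
proof (induct ws arbitrary: t t')
  case (Cons w ws)
  have "reds (App t w) (App t' w)"
    using Cons.prems by (induct rule: rtranclp_induct)
      (auto intro: rtranclp.rtrancl_into_rtrancl red_rede.c_app1)
  then show ?case using Cons.hyps by simp
qed simp

lemma reds_Mu_apps:
  "reds (apps (Mu b) ws) (Mu (subst Var (scons (map (rene id Suc) ws) (\<lambda>_. [])) b))"
proof (induct ws arbitrary: b)
  case Nil then show ?case by (simp add: msubst_nil)
next
  case (Cons e ws)
  have "reds (apps (App (Mu b) e) ws) (apps (Mu (msubst0 b e)) ws)"
    by (rule reds_apps) (auto intro: red_rede.mu)
  also have "reds \<dots> (Mu (subst Var (scons (map (rene id Suc) ws) (\<lambda>_. [])) (msubst0 b e)))"
    by (rule Cons)
  finally show ?case by (simp add: msubst0_msubst id_def)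
qed

lemma reds_Case_apps:
  "reds (apps (App T (Case U V)) ws)
     (App T (Case (apps U (map (rene Suc id) ws)) (apps V (map (rene Suc id) ws))))"
proof (induct ws arbitrary: U V)
  case (Cons e ws)
  have "reds (apps (App (App T (Case U V)) e) ws)
      (apps (App T (Case (App U (rene Suc id e)) (App V (rene Suc id e)))) ws)"
    by (rule reds_apps) (auto intro: red_rede.comm)
  also note Cons
  finally show ?case by (simp add: id_def)
qed simp

primrec fvm :: "trm \<Rightarrow> nat set" and fvme :: "elim \<Rightarrow> nat set" where
  "fvm (Var i) = {}"
| "fvm (Lam t) = fvm t"
| "fvm (App t e) = fvm t \<union> fvme e"
| "fvm (Pair t u) = fvm t \<union> fvm u"
| "fvm (Inj1 t) = fvm t"
| "fvm (Inj2 t) = fvm t"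
| "fvm (Mu t) = {j. Suc j \<in> fvm t}"
| "fvm (MVar a t) = insert a (fvm t)"
| "fvme (ETrm t) = fvm t"
| "fvme Proj1 = {}"
| "fvme Proj2 = {}"
| "fvme (Case u v) = fvm u \<union> fvm v"

lemma finite_fvm: "finite (fvm t)" "finite (fvme e)"
proof (induct t and e rule: trm.induct elim.induct)
  case (Mu t)
  have "{j. Suc j \<in> fvm t} \<subseteq> (\<lambda>x. x - 1) ` fvm t" by force
  then show ?case using Mu by (auto intro: finite_surj)
qed auto

lemma ren_cong:
  "(\<forall>a\<in>fvm t. g a = g' a) \<Longrightarrow> ren f g t = ren f g' t"
  "(\<forall>a\<in>fvme e. g a = g' a) \<Longrightarrow> rene f g e = rene f g' e"
proof (induct t and e arbitrary: f g g' and f g g' rule: trm.induct elim.induct)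
  case (Mu t)
  have "\<forall>a\<in>fvm t. up g a = up g' a" using Mu.prems by (auto simp: up_def split: nat.split)
  then show ?case using Mu.hyps by simp
qed auto

lemma gsubst_fvm_cong:
  "(\<forall>a\<in>fvm t. g a = g' a) \<Longrightarrow> gsubst \<sigma> \<theta> g t = gsubst \<sigma> \<theta> g' t"
  "(\<forall>a\<in>fvme e. g a = g' a) \<Longrightarrow> gsubste \<sigma> \<theta> g e = gsubste \<sigma> \<theta> g' e"
proof (induct t and e arbitrary: \<sigma> \<theta> g g' and \<sigma> \<theta> g g' rule: trm.induct elim.induct)
  case (Mu t)
  have "\<forall>a\<in>fvm t. up g a = up g' a" using Mu.prems by (auto simp: up_def split: nat.split)
  then show ?case using Mu.hyps by simp
next
  case (MVar a t)
  then have "gsubst \<sigma> \<theta> g t = gsubst \<sigma> \<theta> g' t" by simp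
  then show ?case using MVar.prems by simp
qed auto

lemma fresh_mu_name:
  assumes "finite (dom \<Gamma>)" and "\<forall>i. \<Gamma> i = None \<longrightarrow> fvm (\<sigma> i) = {}"
    and "finite (dom \<Delta>)" and "\<forall>j. \<Delta> j = None \<longrightarrow> \<theta> j = []"
  obtains k where "k \<notin> g ` fvm u" and "\<forall>i. k \<notin> fvm (\<sigma> i)"
    and "\<forall>j. \<forall>e\<in>set (\<theta> j). k \<notin> fvme e" and "\<forall>e\<in>set ws. k \<notin> fvme e"
proof -
  let ?F = "g ` fvm u \<union> (\<Union>i\<in>dom \<Gamma>. fvm (\<sigma> i)) \<union> (\<Union>j\<in>dom \<Delta>. \<Union>(fvme ` set (\<theta> j)))
    \<union> \<Union>(fvme ` set ws)"
  have "finite ?F"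
    using assms(1,3) by (intro finite_UnI finite_imageI finite_UN_I) (auto simp: finite_fvm)
  from ex_new_if_finite[OF infinite_UNIV_nat this] obtain k where "k \<notin> ?F" ..
  then have k_u: "k \<notin> g ` fvm u" and k_ws: "\<forall>e\<in>set ws. k \<notin> fvme e"
    and k_\<Gamma>: "\<forall>i\<in>dom \<Gamma>. k \<notin> fvm (\<sigma> i)" and k_\<Delta>: "\<forall>j\<in>dom \<Delta>. \<forall>e\<in>set (\<theta> j). k \<notin> fvme e"
    by simp_all
  have "\<forall>i. k \<notin> fvm (\<sigma> i)" using k_\<Gamma> assms(2) by (metis domIff empty_iff)
  moreover have "\<forall>j. \<forall>e\<in>set (\<theta> j). k \<notin> fvme e" using k_\<Delta> assms(4) by (metis domIff empty_iff empty_set)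
  ultimately show thesis using that[OF k_u _ _ k_ws] by blast
qed

lemma mu_bind_fresh:
  assumes "k \<notin> g ` fvm (Mu t)" and "\<forall>i. k \<notin> fvm (\<sigma> i)"
    and "\<forall>j. \<forall>e\<in>set (\<theta> j). k \<notin> fvme e" and "\<forall>e\<in>set ws. k \<notin> fvme e"
  shows "mu_bind k (gsubst \<sigma> (scons ws \<theta>) (scons k g) t) =
    Mu (gsubst (ren id Suc \<circ> \<sigma>) (scons (map (rene id Suc) ws) (map (rene id Suc) \<circ> \<theta>)) (up g) t)"
proof -
  define \<rho> where "\<rho> = (\<lambda>i::nat. if i = k then 0 else Suc i)"
  have shift_elims: "map (rene id \<rho>) es = map (rene id Suc) es" if "\<forall>e\<in>set es. k \<notin> fvme e" for es
    using that by (auto intro!: ren_cong(2) simp: \<rho>_def)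
  have \<sigma>: "ren id \<rho> \<circ> \<sigma> = ren id Suc \<circ> \<sigma>"
    using assms(2) by (auto intro!: ren_cong(1) simp: fun_eq_iff \<rho>_def)
  have \<theta>: "map (rene id \<rho>) \<circ> scons ws \<theta> = scons (map (rene id Suc) ws) (map (rene id Suc) \<circ> \<theta>)"
    using assms(3,4) by (auto simp: fun_eq_iff scons_def shift_elims split: nat.split)
  have g: "\<forall>a\<in>fvm t. (\<rho> \<circ> scons k g) a = up g a"
    using assms(1) by (auto simp: \<rho>_def scons_def up_def split: nat.split)
  have "mu_bind k (gsubst \<sigma> (scons ws \<theta>) (scons k g) t) =
      Mu (gsubst (ren id \<rho> \<circ> \<sigma>) (map (rene id \<rho>) \<circ> scons ws \<theta>) (\<rho> \<circ> scons k g) t)"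
    by (simp only: mu_bind_def \<rho>_def[symmetric] ren_gsubst)
  then show ?thesis by (simp only: \<sigma> \<theta> gsubst_fvm_cong(1)[OF g])
qed

lemma sat_back: "mu_saturated S \<Longrightarrow> reds v u \<Longrightarrow> u \<in> S \<Longrightarrow> v \<in> S"
  unfolding mu_saturated_def by blast

lemma sat_mu_bind: "mu_saturated S \<Longrightarrow> t \<in> S \<Longrightarrow> mu_bind a t \<in> S"
  unfolding mu_saturated_def by blast

lemma sat_MVar: "mu_saturated S \<Longrightarrow> t \<in> S \<Longrightarrow> MVar a t \<in> S"
  unfolding mu_saturated_def by blast

lemma model_seq_arrow: "G \<in> model S X \<Longrightarrow> \<exists>Y. G = seq_arrow Y S"
proof (induct rule: model.induct)
  case base
  have "S = seq_arrow {[]} S" by (auto simp: seq_arrow_def)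
  then show ?case by blast
next
  case (gen i) then show ?case by blast
next
  case (imp K L)
  then obtain Y where Y: "L = seq_arrow Y S" by blast
  have "s_imp K L = seq_arrow {ETrm u # ws | u ws. u \<in> K \<and> ws \<in> Y} S"
    by (auto simp: Y s_imp_def seq_arrow_def) (metis apps.simps(2))
  then show ?case by blast
next
  case (conj K L)
  then obtain Y1 Y2 where Y: "K = seq_arrow Y1 S" "L = seq_arrow Y2 S" by blast
  have "s_conj K L = seq_arrow ({Proj1 # ws | ws. ws \<in> Y1} \<union> {Proj2 # ws | ws. ws \<in> Y2}) S"
    by (auto simp: Y s_conj_def seq_arrow_def)
      (metis (mono_tags, lifting) UnI1 UnI2 apps.simps(2) mem_Collect_eq)+
  then show ?case by blast
next
  case (disj K L)
  have "s_disj S K L = seq_arrow {[Case u v] | u v. (\<forall>r\<in>K. subst0 u r \<in> S) \<and> (\<forall>s\<in>L. subst0 v s \<in> S)} S"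
    by (auto simp: s_disj_def seq_arrow_def) (metis apps.simps)
  then show ?case by blast
qed

lemma model_perp:
  assumes "G \<in> model S X" shows "G = seq_arrow (perp S G) S"
proof
  obtain Y where "G = seq_arrow Y S" using model_seq_arrow[OF assms] by blast
  then show "seq_arrow (perp S G) S \<subseteq> G" unfolding perp_def seq_arrow_def by auto
qed (auto simp: perp_def seq_arrow_def)

lemma perp_apps: "t \<in> G \<Longrightarrow> ws \<in> perp S G \<Longrightarrow> apps t ws \<in> S"
  unfolding perp_def seq_arrow_def by auto

lemma model_back:
  assumes "G \<in> model S X" "mu_saturated S" "reds v u" "u \<in> G" shows "v \<in> G"
proof -
  obtain Y where Y: "G = seq_arrow Y S" using model_seq_arrow[OF assms(1)] by blast
  have "apps v ws \<in> S" if "ws \<in> Y" for ws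
    using assms(4) that sat_back[OF assms(2) reds_apps[OF assms(3)]] by (auto simp: Y seq_arrow_def)
  then show ?thesis by (simp add: Y seq_arrow_def)
qed

lemma interp_model: "\<forall>p. I p \<in> model S X \<Longrightarrow> interp S I A \<in> model S X"
  by (induct A) (auto intro: model.intros)

lemma sem_Lam:
  assumes "L \<in> model S X" "mu_saturated S" and "\<forall>u\<in>K. subst0 b u \<in> L"
  shows "Lam b \<in> s_imp K L"
  using assms model_back[OF assms(1,2) r_into_rtranclp, OF red_rede.beta] by (auto simp: s_imp_def)

lemma sem_Pair:
  assumes "K \<in> model S X" "L \<in> model S X" "mu_saturated S" and "t \<in> K" "u \<in> L"
  shows "Pair t u \<in> s_conj K L"
  using assms model_back[OF _ assms(3) r_into_rtranclp, OF _ red_rede.proj1]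
    model_back[OF _ assms(3) r_into_rtranclp, OF _ red_rede.proj2]
  by (auto simp: s_conj_def)

lemma sem_Inj1: "mu_saturated S \<Longrightarrow> t \<in> K \<Longrightarrow> Inj1 t \<in> s_disj S K L"
  using sat_back[OF _ r_into_rtranclp, OF _ red_rede.case1] by (auto simp: s_disj_def)

lemma sem_Inj2: "mu_saturated S \<Longrightarrow> t \<in> L \<Longrightarrow> Inj2 t \<in> s_disj S K L"
  using sat_back[OF _ r_into_rtranclp, OF _ red_rede.case2] by (auto simp: s_disj_def)

text \<open>Disjunction elimination into an arbitrary set G of the model, not only S:
  arguments in G^perp are pushed into the branches by the commutation rule.\<close>
lemma sem_Case:
  assumes G: "G \<in> model S X" and S: "mu_saturated S" and t: "t \<in> s_disj S K L"
    and u: "\<forall>r\<in>K. subst0 u r \<in> G" and v: "\<forall>s\<in>L. subst0 v s \<in> G"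
  shows "App t (Case u v) \<in> G"
proof (subst model_perp[OF G], unfold seq_arrow_def, intro CollectI ballI)
  fix ws assume ws: "ws \<in> perp S G"
  let ?W = "map (rene Suc id) ws"
  have "\<forall>r\<in>K. subst0 (apps u ?W) r \<in> S" "\<forall>s\<in>L. subst0 (apps v ?W) s \<in> S"
    using u v ws by (auto simp: subst0_apps intro: perp_apps)
  then have "App t (Case (apps u ?W) (apps v ?W)) \<in> S" using t by (simp add: s_disj_def)
  then show "apps (App t (Case u v)) ws \<in> S" by (rule sat_back[OF S reds_Case_apps])
qed

lemma sem_Mu:
  assumes G: "G \<in> model S X" and S: "mu_saturated S"
    and b: "\<forall>ws\<in>perp S G. Mu (subst Var (scons (map (rene id Suc) ws) (\<lambda>_. [])) b) \<in> S"
  shows "Mu b \<in> G"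
  by (subst model_perp[OF G]) (auto simp: seq_arrow_def intro: sat_back[OF S reds_Mu_apps] b[rule_format])

text \<open>Outside the contexts
  \<sigma> introduces no free mu-names and \<theta> is empty; together with finiteness of the
  contexts this is what makes a fresh mu-name available in the Mu case.\<close>
definition realizes_lctx :: "trm set \<Rightarrow> (nat \<Rightarrow> trm set) \<Rightarrow> ctx \<Rightarrow> (nat \<Rightarrow> trm) \<Rightarrow> bool" where
  "realizes_lctx S I \<Gamma> \<sigma> \<longleftrightarrow> finite (dom \<Gamma>) \<and>
     (\<forall>i B. \<Gamma> i = Some B \<longrightarrow> \<sigma> i \<in> interp S I B) \<and> (\<forall>i. \<Gamma> i = None \<longrightarrow> fvm (\<sigma> i) = {})"

definition realizes_mctx :: "trm set \<Rightarrow> (nat \<Rightarrow> trm set) \<Rightarrow> ctx \<Rightarrow> (nat \<Rightarrow> elim list) \<Rightarrow> bool" where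
  "realizes_mctx S I \<Delta> \<theta> \<longleftrightarrow> finite (dom \<Delta>) \<and>
     (\<forall>j B. \<Delta> j = Some B \<longrightarrow> \<theta> j \<in> perp S (interp S I B)) \<and> (\<forall>j. \<Delta> j = None \<longrightarrow> \<theta> j = [])"

lemma finite_dom_scons: "finite (dom \<Gamma>) \<Longrightarrow> finite (dom (scons x \<Gamma>))"
proof -
  assume "finite (dom \<Gamma>)"
  moreover have "dom (scons x \<Gamma>) \<subseteq> insert 0 (Suc ` dom \<Gamma>)"
  proof
    fix i assume "i \<in> dom (scons x \<Gamma>)"
    then show "i \<in> insert 0 (Suc ` dom \<Gamma>)" by (cases i) auto
  qed
  ultimately show ?thesis by (meson finite_imageI finite_insert finite_subset)
qed

lemma realizes_lctx_scons:
  "realizes_lctx S I \<Gamma> \<sigma> \<Longrightarrow> u \<in> interp S I A \<Longrightarrow> realizes_lctx S I (scons (Some A) \<Gamma>) (scons u \<sigma>)"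
  using finite_dom_scons[of \<Gamma> "Some A"] unfolding realizes_lctx_def
  by (auto simp: scons_def split: nat.splits)

lemma realizes_mctx_scons:
  "realizes_mctx S I \<Delta> \<theta> \<Longrightarrow> ws \<in> perp S (interp S I A) \<Longrightarrow> realizes_mctx S I (scons (Some A) \<Delta>) (scons ws \<theta>)"
  using finite_dom_scons[of \<Delta> "Some A"] unfolding realizes_mctx_def
  by (auto simp: scons_def split: nat.splits)

lemma adequacy_Mu:
  assumes S: "mu_saturated S" and IM: "\<forall>p. I p \<in> model S X"
    and \<sigma>: "realizes_lctx S I \<Gamma> \<sigma>" and \<theta>: "realizes_mctx S I \<Delta> \<theta>"
    and IH: "\<And>\<theta>' g'. realizes_mctx S I (scons (Some A) \<Delta>) \<theta>' \<Longrightarrow> gsubst \<sigma> \<theta>' g' t \<in> S"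
  shows "gsubst \<sigma> \<theta> g (Mu t) \<in> interp S I A"
  unfolding gsubst.simps
proof (rule sem_Mu[OF interp_model[OF IM] S], intro ballI)
  fix ws assume ws: "ws \<in> perp S (interp S I A)"
  have "finite (dom \<Gamma>)" "\<forall>i. \<Gamma> i = None \<longrightarrow> fvm (\<sigma> i) = {}"
    using \<sigma> by (simp_all add: realizes_lctx_def)
  moreover have "finite (dom \<Delta>)" "\<forall>j. \<Delta> j = None \<longrightarrow> \<theta> j = []"
    using \<theta> by (simp_all add: realizes_mctx_def)
  ultimately obtain k where k: "k \<notin> g ` fvm (Mu t)" "\<forall>i. k \<notin> fvm (\<sigma> i)"
      "\<forall>j. \<forall>e\<in>set (\<theta> j). k \<notin> fvme e" "\<forall>e\<in>set ws. k \<notin> fvme e"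
    by (rule fresh_mu_name)
  have "gsubst \<sigma> (scons ws \<theta>) (scons k g) t \<in> S"
    using IH realizes_mctx_scons[OF \<theta> ws] by blast
  then have "mu_bind k (gsubst \<sigma> (scons ws \<theta>) (scons k g) t) \<in> S" by (rule sat_mu_bind[OF S])
  then show "Mu (subst Var (scons (map (rene id Suc) ws) (\<lambda>_. []))
      (gsubst (ren id Suc \<circ> \<sigma>) (scons [] (map (rene id Suc) \<circ> \<theta>)) (up g) t)) \<in> S"
    by (simp only: msubst_Mu_body mu_bind_fresh[OF k])
qed

lemma adequacy:
  assumes S: "mu_saturated S" and IM: "\<forall>p. I p \<in> model S X"
  shows "typing \<Gamma> t A \<Delta> \<Longrightarrow> realizes_lctx S I \<Gamma> \<sigma> \<Longrightarrow> realizes_mctx S I \<Delta> \<theta> \<Longrightarrow>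
    gsubst \<sigma> \<theta> g t \<in> interp S I A"
proof (induct arbitrary: \<sigma> \<theta> g rule: typing.induct)
  case (ax \<Gamma> x A \<Delta>)
  then show ?case by (simp add: realizes_lctx_def)
next
  case (imp_i A \<Gamma> t B \<Delta>)
  have "\<forall>u\<in>interp S I A. gsubst (scons u \<sigma>) \<theta> g t \<in> interp S I B"
    using imp_i.hyps(2) imp_i.prems realizes_lctx_scons by blast
  then show ?case by (simp add: sem_Lam[OF interp_model[OF IM] S] subst0_lifted)
next
  case (imp_e \<Gamma> u A B \<Delta> v)
  then show ?case by (simp add: s_imp_def)
next
  case (conj_i \<Gamma> u A \<Delta> v B)
  then show ?case by (simp add: sem_Pair[OF interp_model[OF IM] interp_model[OF IM] S])
next
  case (conj_e1 \<Gamma> t A B \<Delta>)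
  then show ?case by (simp add: s_conj_def)
next
  case (conj_e2 \<Gamma> t A B \<Delta>)
  then show ?case by (simp add: s_conj_def)
next
  case (disj_i1 \<Gamma> t A \<Delta> B)
  then show ?case by (simp add: sem_Inj1[OF S])
next
  case (disj_i2 \<Gamma> t B \<Delta> A)
  then show ?case by (simp add: sem_Inj2[OF S])
next
  case (disj_e \<Gamma> t A B \<Delta> u C v)
  have "gsubst \<sigma> \<theta> g t \<in> s_disj S (interp S I A) (interp S I B)"
    using disj_e.hyps(2) disj_e.prems by simp
  moreover have "\<forall>r\<in>interp S I A. gsubst (scons r \<sigma>) \<theta> g u \<in> interp S I C"
    using disj_e.hyps(4) disj_e.prems realizes_lctx_scons by blast
  moreover have "\<forall>s\<in>interp S I B. gsubst (scons s \<sigma>) \<theta> g v \<in> interp S I C"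
    using disj_e.hyps(6) disj_e.prems realizes_lctx_scons by blast
  ultimately show ?case by (simp add: sem_Case[OF interp_model[OF IM] S] subst0_lifted)
next
  case (mvar \<Delta> a A \<Gamma> t)
  have "gsubst \<sigma> \<theta> g t \<in> interp S I A" using mvar.hyps(3) mvar.prems by simp
  moreover have "\<theta> a \<in> perp S (interp S I A)" using mvar by (simp add: realizes_mctx_def)
  ultimately show ?case by (simp add: sat_MVar[OF S] perp_apps)
next
  case (mu \<Gamma> t A \<Delta>)
  then show ?case by (intro adequacy_Mu[OF S IM]) simp_all
qed

theorem mainTheorem4:
  fixes S :: "trm set" and X :: "'i \<Rightarrow> elim list set" and I :: "nat \<Rightarrow> trm set"
    and \<Gamma> \<Delta> :: ctx and \<sigma> :: "nat \<Rightarrow> trm" and \<theta> :: "nat \<Rightarrow> elim list"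
    and t :: trm and A :: form
  assumes "mu_saturated S"
    and "\<forall>p. I p \<in> model S X"
    and "finite (dom \<Gamma>)" and "finite (dom \<Delta>)"
    and "\<forall>i B. \<Gamma> i = Some B \<longrightarrow> \<sigma> i \<in> interp S I B"
    and "\<forall>i. \<Gamma> i = None \<longrightarrow> \<sigma> i = Var i"
    and "\<forall>j B. \<Delta> j = Some B \<longrightarrow> \<theta> j \<in> perp S (interp S I B)"
    and "\<forall>j. \<Delta> j = None \<longrightarrow> \<theta> j = []"
    and "typing \<Gamma> t A \<Delta>"
  shows "subst \<sigma> \<theta> t \<in> interp S I A"
proof -
  have "realizes_lctx S I \<Gamma> \<sigma>" using assms(3,5,6) by (simp add: realizes_lctx_def)
  moreover have "realizes_mctx S I \<Delta> \<theta>" using assms(4,7,8) by (simp add: realizes_mctx_def)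
  ultimately have "gsubst \<sigma> \<theta> id t \<in> interp S I A" by (rule adequacy[OF assms(1,2,9)])
  then show ?thesis by (simp add: subst_is_gsubst)
qed

end
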